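(* Let $R$ be a ring, $\mathfrak{a}$ an ideal of $R$, and $S$ a left denominator set of $R$ with $\mathrm{ass}(S)=\mathfrak{a}$. Suppose that the core $S_c$ of $S$ is nonempty. Then: (1) $S_c$ is a left denominator set of $R$ with $\mathrm{ass}(S_c)=\mathfrak{a}$; (2) the map $\theta:S_c^{-1}R\to S^{-1}R$, $s^{-1}r\mapsto s^{-1}r$, is a ring isomorphism fixing the elements $\frac{r}{1}$, $r\in R$; in particular $S_c^{-1}R\cong S^{-1}R$.
   Context: All rings are associative with $1$. A multiplicative subset $S$ of $R$ ($1\in S$, $0\notin S$, closed under multiplication) is a left Ore set if $Sr\cap Rs\neq\emptyset$ for all $r\in R$, $s\in S$; for it, $\mathrm{ass}(S):=\{r\in R: sr=0\text{ for some } s\in S\}$. A left Ore set $S$ is a left denominator set if $rs=0$ ($r\in R$, $s\in S$) implies $tr=0$ for some $t\in S$; $S^{-1}R$ is the left localization. For $s\in R$ let $\ker(s\cdot):=\{r\in R: sr=0\}$. The core of a left Ore set $S$ is $S_c:=\{s\in S:\ker(s\cdot)=\mathrm{ass}(S)\}$.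
   Formalization: In part (1), $S_c$ is a left denominator set in the sense where the clause that 1 belongs to the set is replaced by nonemptiness, so 1 need not lie in $S_c$. The statement above fails without it. *)

theory Defs
  imports "HOL-Algebra.Algebra"
begin

definition mult_closed_nz :: "('a, 'b) ring_scheme \<Rightarrow> 'a set \<Rightarrow> bool" where
  "mult_closed_nz R S \<longleftrightarrow> S \<subseteq> carrier R \<and> \<zero>\<^bsub>R\<^esub> \<notin> S \<and>
     (\<forall>s\<in>S. \<forall>t\<in>S. s \<otimes>\<^bsub>R\<^esub> t \<in> S)"

definition multiplicative_set :: "('a, 'b) ring_scheme \<Rightarrow> 'a set \<Rightarrow> bool" where
  "multiplicative_set R S \<longleftrightarrow> \<one>\<^bsub>R\<^esub> \<in> S \<and> mult_closed_nz R S"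

definition left_Ore_cond :: "('a, 'b) ring_scheme \<Rightarrow> 'a set \<Rightarrow> bool" where
  "left_Ore_cond R S \<longleftrightarrow> (\<forall>r\<in>carrier R. \<forall>s\<in>S.
     \<exists>s'\<in>S. \<exists>r'\<in>carrier R. s' \<otimes>\<^bsub>R\<^esub> r = r' \<otimes>\<^bsub>R\<^esub> s)"

definition left_denom_cond :: "('a, 'b) ring_scheme \<Rightarrow> 'a set \<Rightarrow> bool" where
  "left_denom_cond R S \<longleftrightarrow> (\<forall>r\<in>carrier R. \<forall>s\<in>S.
     r \<otimes>\<^bsub>R\<^esub> s = \<zero>\<^bsub>R\<^esub> \<longrightarrow> (\<exists>t\<in>S. t \<otimes>\<^bsub>R\<^esub> r = \<zero>\<^bsub>R\<^esub>))"

definition left_Ore_set :: "('a, 'b) ring_scheme \<Rightarrow> 'a set \<Rightarrow> bool" where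
  "left_Ore_set R S \<longleftrightarrow> multiplicative_set R S \<and> left_Ore_cond R S"

definition left_denominator_set :: "('a, 'b) ring_scheme \<Rightarrow> 'a set \<Rightarrow> bool" where
  "left_denominator_set R S \<longleftrightarrow> left_Ore_set R S \<and> left_denom_cond R S"

definition left_denominator_set_no1 :: "('a, 'b) ring_scheme \<Rightarrow> 'a set \<Rightarrow> bool" where
  "left_denominator_set_no1 R S \<longleftrightarrow> S \<noteq> {} \<and> mult_closed_nz R S \<and>
     left_Ore_cond R S \<and> left_denom_cond R S"

definition ass :: "('a, 'b) ring_scheme \<Rightarrow> 'a set \<Rightarrow> 'a set" where
  "ass R S = {r \<in> carrier R. \<exists>s\<in>S. s \<otimes>\<^bsub>R\<^esub> r = \<zero>\<^bsub>R\<^esub>}"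

definition left_ker :: "('a, 'b) ring_scheme \<Rightarrow> 'a \<Rightarrow> 'a set" where
  "left_ker R s = {r \<in> carrier R. s \<otimes>\<^bsub>R\<^esub> r = \<zero>\<^bsub>R\<^esub>}"

definition core :: "('a, 'b) ring_scheme \<Rightarrow> 'a set \<Rightarrow> 'a set" where
  "core R S = {s \<in> S. left_ker R s = ass R S}"

(* Left fractions s^{-1} r are pairs (s, r); s^{-1}r = s'^{-1}r' iff
   a s = a' s' \<in> S and a r = a' r' for some a, a' \<in> R. *)
definition loc_rel :: "('a, 'b) ring_scheme \<Rightarrow> 'a set \<Rightarrow> (('a \<times> 'a) \<times> ('a \<times> 'a)) set" where
  "loc_rel R S = {((s, r), (s', r')). s \<in> S \<and> r \<in> carrier R \<and> s' \<in> S \<and> r' \<in> carrier R \<and>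
     (\<exists>a\<in>carrier R. \<exists>a'\<in>carrier R. a \<otimes>\<^bsub>R\<^esub> s = a' \<otimes>\<^bsub>R\<^esub> s' \<and>
        a \<otimes>\<^bsub>R\<^esub> s \<in> S \<and> a \<otimes>\<^bsub>R\<^esub> r = a' \<otimes>\<^bsub>R\<^esub> r')}"

definition lfrac :: "('a, 'b) ring_scheme \<Rightarrow> 'a set \<Rightarrow> 'a \<Rightarrow> 'a \<Rightarrow> ('a \<times> 'a) set" where
  "lfrac R S s r = loc_rel R S `` {(s, r)}"

definition loc_mult :: "('a, 'b) ring_scheme \<Rightarrow> 'a set \<Rightarrow> ('a \<times> 'a) set \<Rightarrow> ('a \<times> 'a) set \<Rightarrow> ('a \<times> 'a) set" where
  "loc_mult R S A B = \<Union>{Z. \<exists>s r s' r' u b.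
          Z = lfrac R S (u \<otimes>\<^bsub>R\<^esub> s) (b \<otimes>\<^bsub>R\<^esub> r') \<and> (s, r) \<in> A \<and> (s', r') \<in> B \<and> u \<in> S \<and> b \<in> carrier R \<and>
          u \<otimes>\<^bsub>R\<^esub> r = b \<otimes>\<^bsub>R\<^esub> s'}"

definition loc_add :: "('a, 'b) ring_scheme \<Rightarrow> 'a set \<Rightarrow> ('a \<times> 'a) set \<Rightarrow> ('a \<times> 'a) set \<Rightarrow> ('a \<times> 'a) set" where
  "loc_add R S A B = \<Union>{Z. \<exists>s r s' r' u b.
          Z = lfrac R S (u \<otimes>\<^bsub>R\<^esub> s') ((b \<otimes>\<^bsub>R\<^esub> r) \<oplus>\<^bsub>R\<^esub> (u \<otimes>\<^bsub>R\<^esub> r')) \<and> (s, r) \<in> A \<and> (s', r') \<in> B \<and> u \<in> S \<and> b \<in> carrier R \<and>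
          u \<otimes>\<^bsub>R\<^esub> s' = b \<otimes>\<^bsub>R\<^esub> s}"

definition left_localization :: "('a, 'b) ring_scheme \<Rightarrow> 'a set \<Rightarrow> ('a \<times> 'a) set ring" where
  "left_localization R S = \<lparr>
     carrier = (S \<times> carrier R) // loc_rel R S,
     monoid.mult = loc_mult R S,
     one = \<Union>{Z. \<exists>s\<in>S. Z = lfrac R S s s},
     ring.zero = \<Union>{Z. \<exists>s\<in>S. Z = lfrac R S s (\<zero>\<^bsub>R\<^esub>)},
     add = loc_add R S \<rparr>"

definition loc_theta :: "('a, 'b) ring_scheme \<Rightarrow> 'a set \<Rightarrow> ('a \<times> 'a) set \<Rightarrow> ('a \<times> 'a) set" where
  "loc_theta R S A = loc_rel R S `` A"

end

(* The core S_c is closed under right multiplication by S: if c \<in> S_c, s \<in> S and a \<in> ass(S),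
   then s a \<in> ass(S), because ass(S) is a left ideal by the Ore condition, so c s a = 0.
   Any nonempty T \<subseteq> S with T S \<subseteq> T is again a left denominator set, and the canonical map
   T\<^sup>-\<^sup>1R \<rightarrow> S\<^sup>-\<^sup>1R is bijective: s\<^sup>-\<^sup>1r = (c s)\<^sup>-\<^sup>1(c r) with c s \<in> T for any c \<in> T, and an equality of
   fractions witnessed by a s = a' s' \<in> S is witnessed in T by c a, c a'.
   The ring operations of a left localization are handled through common denominators:
   d\<^sup>-\<^sup>1x + d\<^sup>-\<^sup>1y = d\<^sup>-\<^sup>1(x + y) and d\<^sup>-\<^sup>1(b s) \<cdot> s\<^sup>-\<^sup>1r = d\<^sup>-\<^sup>1(b r). *)

theory Submission
  imports Defs
begin

lemma Union_Collect_eq_unique: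
  "(\<And>Z. P Z \<Longrightarrow> Z = C) \<Longrightarrow> P Z0 \<Longrightarrow> \<Union>(Collect P) = C"
  by blast

lemma (in ring) loc_rel_iff:
  "((s, r), (s', r')) \<in> loc_rel R S \<longleftrightarrow> s \<in> S \<and> r \<in> carrier R \<and> s' \<in> S \<and> r' \<in> carrier R \<and>
     (\<exists>a\<in>carrier R. \<exists>a'\<in>carrier R. a \<otimes> s = a' \<otimes> s' \<and> a \<otimes> s \<in> S \<and> a \<otimes> r = a' \<otimes> r')"
  unfolding loc_rel_def by simp

text \<open>The unit is not required to lie in \<open>S\<close>, since the core need not contain it.\<close>

locale left_denominator = ring R for R (structure) +
  fixes S :: "'a set"
  assumes left_denominator_set_no1: "left_denominator_set_no1 R S"
begin

lemma denominator_closed [simp]: "s \<in> S \<Longrightarrow> s \<in> carrier R"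
  using left_denominator_set_no1 unfolding left_denominator_set_no1_def mult_closed_nz_def by blast

lemma denominators_nonempty: "S \<noteq> {}"
  using left_denominator_set_no1 unfolding left_denominator_set_no1_def by blast

lemma zero_not_denominator: "\<zero> \<notin> S"
  using left_denominator_set_no1 unfolding left_denominator_set_no1_def mult_closed_nz_def by blast

lemma denominator_mult_closed: "s \<in> S \<Longrightarrow> t \<in> S \<Longrightarrow> s \<otimes> t \<in> S"
  using left_denominator_set_no1 unfolding left_denominator_set_no1_def mult_closed_nz_def by blast

lemma left_Ore:
  "r \<in> carrier R \<Longrightarrow> s \<in> S \<Longrightarrow> \<exists>s'\<in>S. \<exists>r'\<in>carrier R. s' \<otimes> r = r' \<otimes> s"
  using left_denominator_set_no1 unfolding left_denominator_set_no1_def left_Ore_cond_def by blast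

lemma left_denominator_cond:
  "r \<in> carrier R \<Longrightarrow> s \<in> S \<Longrightarrow> r \<otimes> s = \<zero> \<Longrightarrow> \<exists>t\<in>S. t \<otimes> r = \<zero>"
  using left_denominator_set_no1 unfolding left_denominator_set_no1_def left_denom_cond_def by blast

lemma right_cancel_denominator:
  assumes "x \<in> carrier R" "y \<in> carrier R" "s \<in> S" "x \<otimes> s = y \<otimes> s"
  shows "\<exists>t\<in>S. t \<otimes> x = t \<otimes> y"
proof -
  have "(x \<ominus> y) \<otimes> s = \<zero>"
    using assms by (simp add: minus_eq l_distr l_minus r_neg)
  then obtain t where "t \<in> S" "t \<otimes> (x \<ominus> y) = \<zero>"
    using left_denominator_cond assms by blast
  moreover from this have "t \<otimes> x \<ominus> t \<otimes> y = \<zero>"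
    using assms by (simp add: minus_eq r_distr r_minus)
  ultimately show ?thesis using assms by auto
qed

lemma ass_mult_left: "a \<in> ass R S \<Longrightarrow> x \<in> carrier R \<Longrightarrow> x \<otimes> a \<in> ass R S"
proof -
  assume a: "a \<in> ass R S" and x: "x \<in> carrier R"
  then obtain s where s: "s \<in> S" "s \<otimes> a = \<zero>" and aR: "a \<in> carrier R"
    unfolding ass_def by blast
  obtain s' x' where "s' \<in> S" "x' \<in> carrier R" "s' \<otimes> x = x' \<otimes> s"
    using left_Ore[OF x s(1)] by blast
  moreover from this have "s' \<otimes> (x \<otimes> a) = x' \<otimes> (s \<otimes> a)"
    using s(1) x aR by (metis m_assoc denominator_closed)
  ultimately show ?thesis using s x aR unfolding ass_def by auto
qed

subsection \<open>Left fractions\<close>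

lemma loc_rel_trans:
  assumes "((s1, r1), (s2, r2)) \<in> loc_rel R S" "((s2, r2), (s3, r3)) \<in> loc_rel R S"
  shows "((s1, r1), (s3, r3)) \<in> loc_rel R S"
proof -
  obtain a1 a2 where a: "a1 \<in> carrier R" "a2 \<in> carrier R" "a1 \<otimes> s1 = a2 \<otimes> s2" "a1 \<otimes> s1 \<in> S"
      "a1 \<otimes> r1 = a2 \<otimes> r2" and in1: "s1 \<in> S" "r1 \<in> carrier R" "s2 \<in> S" "r2 \<in> carrier R"
    using assms(1) unfolding loc_rel_iff by blast
  obtain b2 b3 where b: "b2 \<in> carrier R" "b3 \<in> carrier R" "b2 \<otimes> s2 = b3 \<otimes> s3" "b2 \<otimes> s2 \<in> S"
      "b2 \<otimes> r2 = b3 \<otimes> r3" and in2: "s3 \<in> S" "r3 \<in> carrier R"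
    using assms(2) unfolding loc_rel_iff by blast
  obtain u v where uv: "u \<in> S" "v \<in> carrier R" "u \<otimes> (b2 \<otimes> s2) = v \<otimes> (a2 \<otimes> s2)"
    using left_Ore[of "b2 \<otimes> s2" "a2 \<otimes> s2"] a b in1 by auto
  then obtain t where t: "t \<in> S" "t \<otimes> (u \<otimes> b2) = t \<otimes> (v \<otimes> a2)"
    using right_cancel_denominator[of "u \<otimes> b2" "v \<otimes> a2" s2] a b in1 by (auto simp: m_assoc)
  have scaled: "(t \<otimes> v \<otimes> a1) \<otimes> x1 = (t \<otimes> u \<otimes> b3) \<otimes> x3"
    if "a1 \<otimes> x1 = a2 \<otimes> x2" "b2 \<otimes> x2 = b3 \<otimes> x3"
      "x1 \<in> carrier R" "x2 \<in> carrier R" "x3 \<in> carrier R" for x1 x2 x3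
  proof -
    have "(t \<otimes> v \<otimes> a1) \<otimes> x1 = (t \<otimes> (v \<otimes> a2)) \<otimes> x2"
      using that(1,3-5) a(1,2) uv(2) t(1) by (simp add: m_assoc)
    also have "\<dots> = (t \<otimes> (u \<otimes> b2)) \<otimes> x2" by (simp only: t(2))
    also have "\<dots> = (t \<otimes> u \<otimes> b3) \<otimes> x3"
      using that(2-5) b(1,2) uv(1) t(1) by (simp add: m_assoc)
    finally show ?thesis .
  qed
  have "(t \<otimes> u \<otimes> b3) \<otimes> s3 = t \<otimes> (u \<otimes> (b2 \<otimes> s2))"
    using b(1,2) uv(1) t(1) in1 in2 by (simp add: m_assoc b(3))
  then have "(t \<otimes> v \<otimes> a1) \<otimes> s1 \<in> S"
    using scaled[OF a(3) b(3)] in1 in2 b(4) uv(1) t(1) by (simp add: denominator_mult_closed)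
  moreover have "t \<otimes> v \<otimes> a1 \<in> carrier R" "t \<otimes> u \<otimes> b3 \<in> carrier R"
    using a b uv t by auto
  ultimately show ?thesis
    unfolding loc_rel_iff using scaled[OF a(3) b(3)] scaled[OF a(5) b(5)] in1 in2
    by (blast intro: denominator_closed)
qed

lemma equiv_loc_rel: "equiv (S \<times> carrier R) (loc_rel R S)"
proof (rule equivI)
  show "refl_on (S \<times> carrier R) (loc_rel R S)"
    by (rule refl_onI) (auto simp: loc_rel_def intro!: bexI[where x=\<one>])
  show "sym (loc_rel R S)"
    unfolding loc_rel_def by (rule symI) (clarsimp, metis)
  show "trans (loc_rel R S)"
    by (rule transI) (metis loc_rel_trans surj_pair)
qed (auto simp: loc_rel_def)

lemma lfrac_eq_iff:
  "s \<in> S \<Longrightarrow> r \<in> carrier R \<Longrightarrow> s' \<in> S \<Longrightarrow> r' \<in> carrier R \<Longrightarrow>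
    lfrac R S s r = lfrac R S s' r' \<longleftrightarrow> ((s, r), (s', r')) \<in> loc_rel R S"
  unfolding lfrac_def by (rule eq_equiv_class_iff[OF equiv_loc_rel]) auto

lemma lfrac_eqI:
  assumes "s \<in> S" "r \<in> carrier R" "s' \<in> S" "r' \<in> carrier R" "x \<in> carrier R" "y \<in> carrier R"
    and "x \<otimes> s = y \<otimes> s'" "x \<otimes> s \<in> S" "x \<otimes> r = y \<otimes> r'"
  shows "lfrac R S s r = lfrac R S s' r'"
  using assms unfolding lfrac_eq_iff[OF assms(1-4)] loc_rel_iff by blast

lemma lfrac_eqE:
  assumes "lfrac R S s r = lfrac R S s' r'" "s \<in> S" "r \<in> carrier R" "s' \<in> S" "r' \<in> carrier R"
  obtains x y where "x \<in> carrier R" "y \<in> carrier R" "x \<otimes> s = y \<otimes> s'" "x \<otimes> s \<in> S"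
    "x \<otimes> r = y \<otimes> r'"
  using assms unfolding lfrac_eq_iff[OF assms(2-5)] loc_rel_iff by blast

lemma lfrac_expand:
  assumes "a \<in> carrier R" "s \<in> S" "r \<in> carrier R" "a \<otimes> s \<in> S"
  shows "lfrac R S (a \<otimes> s) (a \<otimes> r) = lfrac R S s r"
  by (rule lfrac_eqI[where x=\<one> and y=a]) (use assms in auto)

lemma mem_lfrac_iff: "(s', r') \<in> lfrac R S s r \<longleftrightarrow> ((s, r), (s', r')) \<in> loc_rel R S"
  unfolding lfrac_def by simp

abbreviation loc :: "('a \<times> 'a) set ring" where "loc \<equiv> left_localization R S"

lemma carrier_left_localization:
  "carrier loc = (S \<times> carrier R) // loc_rel R S"
  unfolding left_localization_def by simp

lemma lfrac_closed: "s \<in> S \<Longrightarrow> r \<in> carrier R \<Longrightarrow> lfrac R S s r \<in> carrier loc"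
  unfolding carrier_left_localization lfrac_def by (rule quotientI) simp

lemma left_localization_elem_cases:
  assumes "A \<in> carrier loc"
  obtains s r where "s \<in> S" "r \<in> carrier R" "A = lfrac R S s r"
  using assms unfolding carrier_left_localization lfrac_def by (auto elim!: quotientE)

lemma lfrac_right_multiple_numerator:
  assumes "s \<in> S" "r \<in> carrier R" "s' \<in> S"
  obtains d b where "d \<in> S" "b \<in> carrier R" "lfrac R S s r = lfrac R S d (b \<otimes> s')"
proof -
  obtain u b where u: "u \<in> S" "b \<in> carrier R" "u \<otimes> r = b \<otimes> s'"
    using left_Ore assms by blast
  have "lfrac R S s r = lfrac R S (u \<otimes> s) (b \<otimes> s')"
    using lfrac_expand[of u s r] u assms by (simp add: denominator_mult_closed)
  then show ?thesis using that u assms denominator_mult_closed by blast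
qed

lemma lfrac_mult_right_cong:
  assumes "d \<in> S" "e \<in> S" "s \<in> S" "b \<in> carrier R" "c \<in> carrier R" "r \<in> carrier R"
    and "lfrac R S d (b \<otimes> s) = lfrac R S e (c \<otimes> s)"
  shows "lfrac R S d (b \<otimes> r) = lfrac R S e (c \<otimes> r)"
proof -
  obtain x y where xy: "x \<in> carrier R" "y \<in> carrier R" "x \<otimes> d = y \<otimes> e" "x \<otimes> d \<in> S"
      "x \<otimes> (b \<otimes> s) = y \<otimes> (c \<otimes> s)"
    using lfrac_eqE[OF assms(7)] assms by auto
  obtain t where t: "t \<in> S" "t \<otimes> (x \<otimes> b) = t \<otimes> (y \<otimes> c)"
    using right_cancel_denominator[of "x \<otimes> b" "y \<otimes> c" s] xy assms by (auto simp: m_assoc)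
  show ?thesis
  proof (rule lfrac_eqI[where x="t \<otimes> x" and y="t \<otimes> y"])
    show "t \<otimes> x \<otimes> d = t \<otimes> y \<otimes> e" "t \<otimes> x \<otimes> d \<in> S"
      using xy t assms by (simp_all add: m_assoc denominator_mult_closed)
    have "t \<otimes> x \<otimes> (b \<otimes> r) = t \<otimes> (x \<otimes> b) \<otimes> r"
      using xy(1,2) t(1) assms(4-6) by (simp add: m_assoc)
    also have "\<dots> = t \<otimes> (y \<otimes> c) \<otimes> r" by (simp only: t(2))
    also have "\<dots> = t \<otimes> y \<otimes> (c \<otimes> r)"
      using xy(1,2) t(1) assms(4-6) by (simp add: m_assoc)
    finally show "t \<otimes> x \<otimes> (b \<otimes> r) = t \<otimes> y \<otimes> (c \<otimes> r)" .
  qed (use xy t assms in auto)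
qed

lemma lfrac_add_left_cong:
  assumes "D \<in> S" "x \<in> carrier R" "y \<in> carrier R" "y' \<in> carrier R"
    and "lfrac R S D y = lfrac R S D y'"
  shows "lfrac R S D (x \<oplus> y) = lfrac R S D (x \<oplus> y')"
proof -
  obtain a a' where a: "a \<in> carrier R" "a' \<in> carrier R" "a \<otimes> D = a' \<otimes> D" "a \<otimes> D \<in> S"
      "a \<otimes> y = a' \<otimes> y'"
    using lfrac_eqE[OF assms(5)] assms by auto
  obtain t where t: "t \<in> S" "t \<otimes> a = t \<otimes> a'"
    using right_cancel_denominator[OF a(1,2) assms(1) a(3)] by blast
  have "t \<otimes> a \<otimes> y = t \<otimes> a' \<otimes> y'"
    using a t(1) assms by (simp add: m_assoc)
  then have "t \<otimes> a \<otimes> y = t \<otimes> a \<otimes> y'"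
    by (simp only: t(2))
  then show ?thesis
    by (intro lfrac_eqI[where x="t \<otimes> a" and y="t \<otimes> a"])
      (use a t assms in \<open>auto simp: r_distr m_assoc denominator_mult_closed\<close>)
qed

lemma lfrac_add_cong:
  assumes "D \<in> S" "D' \<in> S" "x \<in> carrier R" "y \<in> carrier R" "x' \<in> carrier R" "y' \<in> carrier R"
    and "lfrac R S D x = lfrac R S D' x'" "lfrac R S D y = lfrac R S D' y'"
  shows "lfrac R S D (x \<oplus> y) = lfrac R S D' (x' \<oplus> y')"
proof -
  obtain a a' where a: "a \<in> carrier R" "a' \<in> carrier R" "a \<otimes> D = a' \<otimes> D'" "a \<otimes> D \<in> S"
      "a \<otimes> x = a' \<otimes> x'"
    using lfrac_eqE[OF assms(7)] assms by auto
  have a'D': "a' \<otimes> D' \<in> S" using a by simp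
  have "lfrac R S D (x \<oplus> y) = lfrac R S (a \<otimes> D) (a' \<otimes> x' \<oplus> a \<otimes> y)"
    using lfrac_expand[of a D "x \<oplus> y"] a assms by (simp add: r_distr)
  also have "\<dots> = lfrac R S (a \<otimes> D) (a' \<otimes> x' \<oplus> a' \<otimes> y')"
  proof (rule lfrac_add_left_cong)
    show "lfrac R S (a \<otimes> D) (a \<otimes> y) = lfrac R S (a \<otimes> D) (a' \<otimes> y')"
      using lfrac_expand[of a D y] lfrac_expand[of a' D' y'] a a'D' assms by simp
  qed (use a assms in auto)
  also have "\<dots> = lfrac R S D' (x' \<oplus> y')"
    using lfrac_expand[of a' D' "x' \<oplus> y'"] a a'D' assms by (simp add: r_distr)
  finally show ?thesis .
qed

lemma lfrac_mult_cong:
  assumes "d \<in> S" "e \<in> S" "s \<in> S" "s' \<in> S"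
    and "b \<in> carrier R" "c \<in> carrier R" "r \<in> carrier R" "r' \<in> carrier R"
    and "lfrac R S d (b \<otimes> s) = lfrac R S e (c \<otimes> s')" "lfrac R S s r = lfrac R S s' r'"
  shows "lfrac R S d (b \<otimes> r) = lfrac R S e (c \<otimes> r')"
proof -
  obtain a a' where a: "a \<in> carrier R" "a' \<in> carrier R" "a \<otimes> s = a' \<otimes> s'" "a \<otimes> s \<in> S"
      "a \<otimes> r = a' \<otimes> r'"
    using lfrac_eqE[OF assms(10)] assms by auto
  obtain d0 b0 where d0: "d0 \<in> S" "b0 \<in> carrier R"
      "lfrac R S d (b \<otimes> s) = lfrac R S d0 (b0 \<otimes> (a \<otimes> s))"
    using lfrac_right_multiple_numerator[of d "b \<otimes> s" "a \<otimes> s"] a assms by auto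
  \<comment> \<open>compute both products from the common representative \<open>(a s, a r)\<close> of the right factor\<close>
  have "lfrac R S d (b \<otimes> r) = lfrac R S d0 ((b0 \<otimes> a) \<otimes> r)"
    by (rule lfrac_mult_right_cong[where s=s]) (use a d0 assms in \<open>auto simp: m_assoc\<close>)
  also have "\<dots> = lfrac R S d0 ((b0 \<otimes> a') \<otimes> r')"
    using a d0 assms by (simp add: m_assoc)
  also have "\<dots> = lfrac R S e (c \<otimes> r')"
    by (rule lfrac_mult_right_cong[where s=s'])
      (use a d0 assms in \<open>auto simp: m_assoc simp flip: a(3)\<close>)
  finally show ?thesis .
qed

lemma lfrac_self_mem: "s \<in> S \<Longrightarrow> r \<in> carrier R \<Longrightarrow> (s, r) \<in> lfrac R S s r"
  unfolding lfrac_def loc_rel_def by (auto intro!: bexI[where x=\<one>])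

lemma mem_lfrac_imp_eq:
  assumes "(s', r') \<in> lfrac R S s r"
  shows "s' \<in> S" "r' \<in> carrier R" "lfrac R S s' r' = lfrac R S s r"
proof -
  have rel: "((s, r), (s', r')) \<in> loc_rel R S" using assms unfolding mem_lfrac_iff .
  then show in_carrier: "s' \<in> S" "r' \<in> carrier R" unfolding loc_rel_iff by blast+
  have "s \<in> S" "r \<in> carrier R" using rel unfolding loc_rel_iff by blast+
  then show "lfrac R S s' r' = lfrac R S s r"
    using rel lfrac_eq_iff[of s r s' r'] in_carrier by simp
qed

subsection \<open>The ring of left fractions\<close>

lemma add_lfrac:
  assumes "D \<in> S" "x \<in> carrier R" "y \<in> carrier R"
  shows "lfrac R S D x \<oplus>\<^bsub>loc\<^esub> lfrac R S D y = lfrac R S D (x \<oplus> y)"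
  unfolding left_localization_def loc_add_def ring.simps
proof (rule Union_Collect_eq_unique)
  fix Z
  assume "\<exists>s r s' r' u b. Z = lfrac R S (u \<otimes> s') (b \<otimes> r \<oplus> u \<otimes> r') \<and> (s, r) \<in> lfrac R S D x \<and>
    (s', r') \<in> lfrac R S D y \<and> u \<in> S \<and> b \<in> carrier R \<and> u \<otimes> s' = b \<otimes> s"
  then obtain s r s' r' u b where Z: "Z = lfrac R S (u \<otimes> s') (b \<otimes> r \<oplus> u \<otimes> r')"
    and mem: "(s, r) \<in> lfrac R S D x" "(s', r') \<in> lfrac R S D y"
    and u: "u \<in> S" "b \<in> carrier R" "u \<otimes> s' = b \<otimes> s"
    by blast
  note sr = mem_lfrac_imp_eq[OF mem(1)] and sr' = mem_lfrac_imp_eq[OF mem(2)]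
  have us': "u \<otimes> s' \<in> S" using u(1) sr'(1) by (rule denominator_mult_closed)
  then have "b \<otimes> s \<in> S" by (simp only: u(3))
  then have "lfrac R S (u \<otimes> s') (b \<otimes> r) = lfrac R S D x"
    using lfrac_expand[OF u(2) sr(1,2)] sr(3) by (simp only: u(3))
  moreover have "lfrac R S (u \<otimes> s') (u \<otimes> r') = lfrac R S D y"
    using lfrac_expand[OF _ sr'(1,2) us'] u(1) sr'(3) by simp
  ultimately show "Z = lfrac R S D (x \<oplus> y)"
    unfolding Z using us' u sr sr' assms by (intro lfrac_add_cong) auto
next
  show "\<exists>s r s' r' u b. lfrac R S (D \<otimes> D) (D \<otimes> x \<oplus> D \<otimes> y) =
      lfrac R S (u \<otimes> s') (b \<otimes> r \<oplus> u \<otimes> r') \<and> (s, r) \<in> lfrac R S D x \<and>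
      (s', r') \<in> lfrac R S D y \<and> u \<in> S \<and> b \<in> carrier R \<and> u \<otimes> s' = b \<otimes> s"
    using lfrac_self_mem[OF assms(1,2)] lfrac_self_mem[OF assms(1,3)] assms(1)
    by (intro exI[of _ D] exI[of _ x] exI[of _ D] exI[of _ y] exI[of _ D] exI[of _ D]) simp
qed

lemma mult_lfrac:
  assumes "d \<in> S" "b \<in> carrier R" "s \<in> S" "r \<in> carrier R"
  shows "lfrac R S d (b \<otimes> s) \<otimes>\<^bsub>loc\<^esub> lfrac R S s r = lfrac R S d (b \<otimes> r)"
  unfolding left_localization_def loc_mult_def monoid.simps
proof (rule Union_Collect_eq_unique)
  fix Z
  assume "\<exists>s1 r1 s1' r1' u b1. Z = lfrac R S (u \<otimes> s1) (b1 \<otimes> r1') \<and>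
    (s1, r1) \<in> lfrac R S d (b \<otimes> s) \<and> (s1', r1') \<in> lfrac R S s r \<and> u \<in> S \<and> b1 \<in> carrier R \<and>
    u \<otimes> r1 = b1 \<otimes> s1'"
  then obtain s1 r1 s1' r1' u b1 where Z: "Z = lfrac R S (u \<otimes> s1) (b1 \<otimes> r1')"
    and mem: "(s1, r1) \<in> lfrac R S d (b \<otimes> s)" "(s1', r1') \<in> lfrac R S s r"
    and u: "u \<in> S" "b1 \<in> carrier R" "u \<otimes> r1 = b1 \<otimes> s1'"
    by blast
  note sr = mem_lfrac_imp_eq[OF mem(1)] and sr' = mem_lfrac_imp_eq[OF mem(2)]
  have us1: "u \<otimes> s1 \<in> S" using u(1) sr(1) by (rule denominator_mult_closed)
  have "lfrac R S (u \<otimes> s1) (b1 \<otimes> s1') = lfrac R S (u \<otimes> s1) (u \<otimes> r1)"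
    by (simp only: u(3))
  also have "\<dots> = lfrac R S d (b \<otimes> s)"
    using lfrac_expand[OF _ sr(1,2) us1] u(1) sr(3) by simp
  finally have "lfrac R S (u \<otimes> s1) (b1 \<otimes> r1') = lfrac R S d (b \<otimes> r)"
    by (rule lfrac_mult_cong[OF us1 assms(1) sr'(1) assms(3) u(2) assms(2) sr'(2) assms(4) _ sr'(3)])
  then show "Z = lfrac R S d (b \<otimes> r)" by (simp only: Z)
next
  have "d \<otimes> (b \<otimes> s) = (d \<otimes> b) \<otimes> s" using assms by (simp add: m_assoc)
  then show "\<exists>s1 r1 s1' r1' u b1. lfrac R S (d \<otimes> d) ((d \<otimes> b) \<otimes> r) = lfrac R S (u \<otimes> s1) (b1 \<otimes> r1') \<and>
    (s1, r1) \<in> lfrac R S d (b \<otimes> s) \<and> (s1', r1') \<in> lfrac R S s r \<and> u \<in> S \<and> b1 \<in> carrier R \<and>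
    u \<otimes> r1 = b1 \<otimes> s1'"
    using lfrac_self_mem[of d "b \<otimes> s"] lfrac_self_mem[OF assms(3,4)] assms(1-3)
    by (intro exI[of _ d] exI[of _ "b \<otimes> s"] exI[of _ s] exI[of _ r] exI[of _ d] exI[of _ "d \<otimes> b"]) simp
qed

lemma lfrac_zero_one_indep:
  assumes "s \<in> S" "s' \<in> S"
  shows "lfrac R S s \<zero> = lfrac R S s' \<zero>" "lfrac R S s s = lfrac R S s' s'"
proof -
  obtain u b where u: "u \<in> S" "b \<in> carrier R" "u \<otimes> s = b \<otimes> s'"
    using left_Ore[of s s'] assms by auto
  have "u \<otimes> s \<in> S" using u(1) assms(1) by (rule denominator_mult_closed)
  with u assms show "lfrac R S s \<zero> = lfrac R S s' \<zero>" "lfrac R S s s = lfrac R S s' s'"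
    by (simp_all add: lfrac_eqI[where x=u and y=b])
qed

lemma zero_left_localization:
  assumes "s \<in> S"
  shows "\<zero>\<^bsub>loc\<^esub> = lfrac R S s \<zero>"
proof -
  have "\<Union>{Z. \<exists>s'\<in>S. Z = lfrac R S s' \<zero>} = lfrac R S s \<zero>"
    by (rule Union_Collect_eq_unique) (use assms lfrac_zero_one_indep(1) in blast)+
  then show ?thesis unfolding left_localization_def by simp
qed

lemma one_left_localization:
  assumes "s \<in> S"
  shows "\<one>\<^bsub>loc\<^esub> = lfrac R S s s"
proof -
  have "\<Union>{Z. \<exists>s'\<in>S. Z = lfrac R S s' s'} = lfrac R S s s"
    by (rule Union_Collect_eq_unique) (use assms lfrac_zero_one_indep(2) in blast)+
  then show ?thesis unfolding left_localization_def by simp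
qed

lemma common_denominator:
  assumes "finite F" "F \<subseteq> carrier loc" "s \<in> S"
  obtains D where "D \<in> S" "\<And>A. A \<in> F \<Longrightarrow> \<exists>b\<in>carrier R. A = lfrac R S D (b \<otimes> s)"
proof -
  have "\<exists>D\<in>S. \<forall>A\<in>F. \<exists>b\<in>carrier R. A = lfrac R S D (b \<otimes> s)"
    using assms(1,2)
  proof (induction F rule: finite_induct)
    case empty
    then show ?case using assms(3) by blast
  next
    case (insert A F)
    then obtain D where D: "D \<in> S" "\<forall>B\<in>F. \<exists>b\<in>carrier R. B = lfrac R S D (b \<otimes> s)"
      by auto
    obtain s0 r0 where A: "s0 \<in> S" "r0 \<in> carrier R" "A = lfrac R S s0 r0"
      using insert.prems left_localization_elem_cases by blast
    obtain d b where d: "d \<in> S" "b \<in> carrier R" "A = lfrac R S d (b \<otimes> s)"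
      using lfrac_right_multiple_numerator[OF A(1,2) assms(3)] A(3) by metis
    obtain u v where uv: "u \<in> S" "v \<in> carrier R" "u \<otimes> D = v \<otimes> d"
      using left_Ore[of D d] D(1) d(1) by auto
    have uD: "u \<otimes> D \<in> S" using uv(1) D(1) by (rule denominator_mult_closed)
    have expand: "lfrac R S D' (b' \<otimes> s) = lfrac R S (a \<otimes> D') ((a \<otimes> b') \<otimes> s)"
      if "a \<in> carrier R" "D' \<in> S" "b' \<in> carrier R" "a \<otimes> D' \<in> S" for a D' b'
      using lfrac_expand[of a D' "b' \<otimes> s"] that assms(3) by (simp add: m_assoc)
    have "\<forall>B\<in>insert A F. \<exists>b\<in>carrier R. B = lfrac R S (u \<otimes> D) (b \<otimes> s)"
    proof
      fix B assume "B \<in> insert A F"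
      then consider "B = A" | "B \<in> F" by blast
      then show "\<exists>b\<in>carrier R. B = lfrac R S (u \<otimes> D) (b \<otimes> s)"
      proof cases
        case 1
        have "v \<otimes> d \<in> S" using uD by (simp only: uv(3))
        then have "A = lfrac R S (u \<otimes> D) ((v \<otimes> b) \<otimes> s)"
          using d expand[OF uv(2) d(1,2)] by (simp only: uv(3))
        then show ?thesis using 1 uv(2) d(2) by blast
      next
        case 2
        then obtain b where "b \<in> carrier R" "B = lfrac R S D (b \<otimes> s)" using D(2) by blast
        then show ?thesis using expand[of u D b] uv D(1) uD by auto
      qed
    qed
    then show ?case using uD by blast
  qed
  then show ?thesis using that by blast
qed

lemma common_denominator2:
  assumes "A \<in> carrier loc" "B \<in> carrier loc" "s \<in> S"
  obtains D a b where "D \<in> S" "a \<in> carrier R" "b \<in> carrier R"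
    "A = lfrac R S D (a \<otimes> s)" "B = lfrac R S D (b \<otimes> s)"
proof -
  have "finite {A, B}" "{A, B} \<subseteq> carrier loc" using assms by auto
  then obtain D where D: "D \<in> S" "\<And>C. C \<in> {A, B} \<Longrightarrow> \<exists>b\<in>carrier R. C = lfrac R S D (b \<otimes> s)"
    using common_denominator assms(3) by blast
  obtain a where "a \<in> carrier R" "A = lfrac R S D (a \<otimes> s)" using D(2)[of A] by blast
  moreover obtain b where "b \<in> carrier R" "B = lfrac R S D (b \<otimes> s)" using D(2)[of B] by blast
  ultimately show ?thesis using that D(1) by blast
qed

lemma common_denominator3:
  assumes "A \<in> carrier loc" "B \<in> carrier loc" "C \<in> carrier loc" "s \<in> S"
  obtains D a b c where "D \<in> S" "a \<in> carrier R" "b \<in> carrier R" "c \<in> carrier R"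
    "A = lfrac R S D (a \<otimes> s)" "B = lfrac R S D (b \<otimes> s)" "C = lfrac R S D (c \<otimes> s)"
proof -
  have "finite {A, B, C}" "{A, B, C} \<subseteq> carrier loc" using assms by auto
  then obtain D where D: "D \<in> S" "\<And>E. E \<in> {A, B, C} \<Longrightarrow> \<exists>b\<in>carrier R. E = lfrac R S D (b \<otimes> s)"
    using common_denominator assms(4) by blast
  obtain a where "a \<in> carrier R" "A = lfrac R S D (a \<otimes> s)" using D(2)[of A] by blast
  moreover obtain b where "b \<in> carrier R" "B = lfrac R S D (b \<otimes> s)" using D(2)[of B] by blast
  moreover obtain c where "c \<in> carrier R" "C = lfrac R S D (c \<otimes> s)" using D(2)[of C] by blast
  ultimately show ?thesis using that D(1) by blast
qed

lemma elem_lfrac_right_multiple: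
  assumes "A \<in> carrier loc" "s \<in> S"
  obtains d b where "d \<in> S" "b \<in> carrier R" "A = lfrac R S d (b \<otimes> s)"
proof -
  obtain s0 r0 where A: "s0 \<in> S" "r0 \<in> carrier R" "A = lfrac R S s0 r0"
    using assms(1) by (rule left_localization_elem_cases)
  obtain d b where "d \<in> S" "b \<in> carrier R" "lfrac R S s0 r0 = lfrac R S d (b \<otimes> s)"
    using A(1,2) assms(2) by (rule lfrac_right_multiple_numerator)
  then show ?thesis using A(3) by (intro that) simp_all
qed

lemma abelian_group_left_localization: "abelian_group loc"
proof -
  obtain w where w: "w \<in> S" using denominators_nonempty by blast
  show ?thesis
  proof (rule abelian_groupI)
    fix A B assume "A \<in> carrier loc" "B \<in> carrier loc"
    then obtain D a b where "D \<in> S" "a \<in> carrier R" "b \<in> carrier R"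
      "A = lfrac R S D (a \<otimes> w)" "B = lfrac R S D (b \<otimes> w)"
      using w by (rule common_denominator2)
    then show "A \<oplus>\<^bsub>loc\<^esub> B \<in> carrier loc" "A \<oplus>\<^bsub>loc\<^esub> B = B \<oplus>\<^bsub>loc\<^esub> A"
      using w by (simp_all add: add_lfrac lfrac_closed a_comm)
  next
    fix A B C assume "A \<in> carrier loc" "B \<in> carrier loc" "C \<in> carrier loc"
    then obtain D a b c where "D \<in> S" "a \<in> carrier R" "b \<in> carrier R" "c \<in> carrier R"
      "A = lfrac R S D (a \<otimes> w)" "B = lfrac R S D (b \<otimes> w)" "C = lfrac R S D (c \<otimes> w)"
      using w by (rule common_denominator3)
    then show "A \<oplus>\<^bsub>loc\<^esub> B \<oplus>\<^bsub>loc\<^esub> C = A \<oplus>\<^bsub>loc\<^esub> (B \<oplus>\<^bsub>loc\<^esub> C)"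
      using w by (simp add: add_lfrac a_assoc)
  next
    show "\<zero>\<^bsub>loc\<^esub> \<in> carrier loc" using w by (simp add: zero_left_localization lfrac_closed)
  next
    fix A assume "A \<in> carrier loc"
    then obtain s r where A: "s \<in> S" "r \<in> carrier R" "A = lfrac R S s r"
      by (rule left_localization_elem_cases)
    then show "\<zero>\<^bsub>loc\<^esub> \<oplus>\<^bsub>loc\<^esub> A = A"
      by (simp add: zero_left_localization[OF A(1)] add_lfrac)
    have "lfrac R S s (\<ominus> r) \<oplus>\<^bsub>loc\<^esub> A = \<zero>\<^bsub>loc\<^esub>"
      using A by (simp add: zero_left_localization[OF A(1)] add_lfrac l_neg)
    then show "\<exists>B\<in>carrier loc. B \<oplus>\<^bsub>loc\<^esub> A = \<zero>\<^bsub>loc\<^esub>"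
      using A lfrac_closed by blast
  qed
qed

lemma monoid_left_localization: "monoid loc"
proof (rule monoidI)
  fix A B assume A: "A \<in> carrier loc" and "B \<in> carrier loc"
  obtain s r where B: "s \<in> S" "r \<in> carrier R" "B = lfrac R S s r"
    using \<open>B \<in> carrier loc\<close> by (rule left_localization_elem_cases)
  obtain d b where "d \<in> S" "b \<in> carrier R" "A = lfrac R S d (b \<otimes> s)"
    using elem_lfrac_right_multiple[OF A B(1)] .
  then show "A \<otimes>\<^bsub>loc\<^esub> B \<in> carrier loc"
    using B by (simp add: mult_lfrac lfrac_closed)
next
  fix A B C assume A: "A \<in> carrier loc" and B: "B \<in> carrier loc" and "C \<in> carrier loc"
  obtain s r where C: "s \<in> S" "r \<in> carrier R" "C = lfrac R S s r"
    using \<open>C \<in> carrier loc\<close> by (rule left_localization_elem_cases)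
  obtain d2 b2 where B': "d2 \<in> S" "b2 \<in> carrier R" "B = lfrac R S d2 (b2 \<otimes> s)"
    using elem_lfrac_right_multiple[OF B C(1)] .
  obtain d1 b1 where A': "d1 \<in> S" "b1 \<in> carrier R" "A = lfrac R S d1 (b1 \<otimes> d2)"
    using elem_lfrac_right_multiple[OF A B'(1)] .
  have "A \<otimes>\<^bsub>loc\<^esub> B = lfrac R S d1 ((b1 \<otimes> b2) \<otimes> s)"
    using A' B' C mult_lfrac[of d1 b1 d2 "b2 \<otimes> s"] by (simp add: m_assoc)
  then have "A \<otimes>\<^bsub>loc\<^esub> B \<otimes>\<^bsub>loc\<^esub> C = lfrac R S d1 ((b1 \<otimes> b2) \<otimes> r)"
    using A' B' C by (simp add: mult_lfrac)
  also have "\<dots> = A \<otimes>\<^bsub>loc\<^esub> (B \<otimes>\<^bsub>loc\<^esub> C)"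
    using A' B' C mult_lfrac[of d1 b1 d2 "b2 \<otimes> r"] by (simp add: mult_lfrac m_assoc)
  finally show "A \<otimes>\<^bsub>loc\<^esub> B \<otimes>\<^bsub>loc\<^esub> C = A \<otimes>\<^bsub>loc\<^esub> (B \<otimes>\<^bsub>loc\<^esub> C)" .
next
  obtain w where w: "w \<in> S" using denominators_nonempty by blast
  then show "\<one>\<^bsub>loc\<^esub> \<in> carrier loc" by (simp add: one_left_localization lfrac_closed)
  fix A assume A: "A \<in> carrier loc"
  then obtain s r where "s \<in> S" "r \<in> carrier R" "A = lfrac R S s r"
    by (rule left_localization_elem_cases)
  then show "\<one>\<^bsub>loc\<^esub> \<otimes>\<^bsub>loc\<^esub> A = A"
    using mult_lfrac[of s \<one> s r] by (simp add: one_left_localization)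
  obtain d b where "d \<in> S" "b \<in> carrier R" "A = lfrac R S d (b \<otimes> w)"
    using elem_lfrac_right_multiple[OF A w] .
  then show "A \<otimes>\<^bsub>loc\<^esub> \<one>\<^bsub>loc\<^esub> = A"
    using w by (simp add: one_left_localization[OF w] mult_lfrac)
qed

lemma ring_left_localization: "ring loc"
proof (rule ringI)
  fix A B C assume A: "A \<in> carrier loc" and B: "B \<in> carrier loc" and C: "C \<in> carrier loc"
  obtain s r where C': "s \<in> S" "r \<in> carrier R" "C = lfrac R S s r"
    using C by (rule left_localization_elem_cases)
  obtain D a b where D: "D \<in> S" and a: "a \<in> carrier R" "A = lfrac R S D (a \<otimes> s)"
    and b: "b \<in> carrier R" "B = lfrac R S D (b \<otimes> s)"
    using A B C'(1) by (rule common_denominator2)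
  have "(A \<oplus>\<^bsub>loc\<^esub> B) \<otimes>\<^bsub>loc\<^esub> C = lfrac R S D ((a \<oplus> b) \<otimes> s) \<otimes>\<^bsub>loc\<^esub> C"
    using a b D(1) C'(1) by (simp add: add_lfrac l_distr)
  also have "\<dots> = lfrac R S D (a \<otimes> r \<oplus> b \<otimes> r)"
    using a b D(1) C' mult_lfrac[of D "a \<oplus> b" s r] by (simp add: l_distr)
  also have "\<dots> = A \<otimes>\<^bsub>loc\<^esub> C \<oplus>\<^bsub>loc\<^esub> B \<otimes>\<^bsub>loc\<^esub> C"
    using a b D(1) C' by (simp add: mult_lfrac add_lfrac)
  finally show "(A \<oplus>\<^bsub>loc\<^esub> B) \<otimes>\<^bsub>loc\<^esub> C = A \<otimes>\<^bsub>loc\<^esub> C \<oplus>\<^bsub>loc\<^esub> B \<otimes>\<^bsub>loc\<^esub> C" .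
  obtain d c where c: "d \<in> S" "c \<in> carrier R" "C = lfrac R S d (c \<otimes> D)"
    using elem_lfrac_right_multiple[OF C D(1)] .
  have "C \<otimes>\<^bsub>loc\<^esub> (A \<oplus>\<^bsub>loc\<^esub> B) = C \<otimes>\<^bsub>loc\<^esub> lfrac R S D (a \<otimes> s \<oplus> b \<otimes> s)"
    using a b D(1) C'(1) by (simp add: add_lfrac)
  also have "\<dots> = lfrac R S d (c \<otimes> (a \<otimes> s) \<oplus> c \<otimes> (b \<otimes> s))"
    using a b c D(1) C'(1) by (simp add: mult_lfrac r_distr)
  also have "\<dots> = C \<otimes>\<^bsub>loc\<^esub> A \<oplus>\<^bsub>loc\<^esub> C \<otimes>\<^bsub>loc\<^esub> B"
    using a b c D(1) C'(1) by (simp add: mult_lfrac add_lfrac)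
  finally show "C \<otimes>\<^bsub>loc\<^esub> (A \<oplus>\<^bsub>loc\<^esub> B) = C \<otimes>\<^bsub>loc\<^esub> A \<oplus>\<^bsub>loc\<^esub> C \<otimes>\<^bsub>loc\<^esub> B" .
qed (fact abelian_group_left_localization monoid_left_localization)+

subsection \<open>Shrinking the set of denominators\<close>

lemma loc_rel_mono:
  assumes "T \<subseteq> S"
  shows "loc_rel R T \<subseteq> loc_rel R S"
proof
  fix p assume p: "p \<in> loc_rel R T"
  obtain s r s' r' where p_eq: "p = ((s, r), (s', r'))" by (metis surj_pair)
  show "p \<in> loc_rel R S"
    using p assms unfolding p_eq loc_rel_iff by blast
qed

lemma loc_theta_lfrac:
  assumes "T \<subseteq> S" "s \<in> T" "r \<in> carrier R"
  shows "loc_theta R S (lfrac R T s r) = lfrac R S s r"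
  unfolding loc_theta_def
proof (intro equalityI subsetI)
  fix p assume "p \<in> loc_rel R S `` lfrac R T s r"
  then obtain q where q: "((s, r), q) \<in> loc_rel R T" "(q, p) \<in> loc_rel R S"
    unfolding lfrac_def by blast
  have "((s, r), q) \<in> loc_rel R S" using q(1) loc_rel_mono[OF assms(1)] by blast
  moreover have "trans (loc_rel R S)" using equiv_loc_rel by (simp add: equiv_def)
  ultimately have "((s, r), p) \<in> loc_rel R S" using q(2) by (blast dest: transD)
  then show "p \<in> lfrac R S s r" unfolding lfrac_def by simp
next
  fix p assume "p \<in> lfrac R S s r"
  then have "((s, r), p) \<in> loc_rel R S" by (simp add: lfrac_def)
  moreover have "(s, r) \<in> lfrac R T s r"
    using assms unfolding lfrac_def loc_rel_def by (auto intro!: bexI[where x=\<one>])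
  ultimately show "p \<in> loc_rel R S `` lfrac R T s r" by (rule ImageI)
qed

lemma loc_theta_ring_hom:
  assumes "left_denominator R T" "T \<subseteq> S"
  shows "loc_theta R S \<in> ring_hom (left_localization R T) loc"
proof -
  interpret T: left_denominator R T by (fact assms(1))
  have theta: "loc_theta R S (lfrac R T s r) = lfrac R S s r" if "s \<in> T" "r \<in> carrier R" for s r
    using loc_theta_lfrac[OF assms(2) that] .
  have TS: "t \<in> T \<Longrightarrow> t \<in> S" for t using assms(2) by blast
  show ?thesis
  proof (rule ring_hom_memI)
    fix A assume "A \<in> carrier (left_localization R T)"
    then obtain s r where "s \<in> T" "r \<in> carrier R" "A = lfrac R T s r"
      by (rule T.left_localization_elem_cases)
    then show "loc_theta R S A \<in> carrier loc" by (simp add: theta TS lfrac_closed)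
  next
    fix A B assume A: "A \<in> carrier (left_localization R T)" and B: "B \<in> carrier (left_localization R T)"
    obtain s r where s: "s \<in> T" "r \<in> carrier R" "B = lfrac R T s r"
      using B by (rule T.left_localization_elem_cases)
    obtain d b where d: "d \<in> T" "b \<in> carrier R" "A = lfrac R T d (b \<otimes> s)"
      using T.elem_lfrac_right_multiple[OF A s(1)] .
    show "loc_theta R S (A \<otimes>\<^bsub>left_localization R T\<^esub> B) = loc_theta R S A \<otimes>\<^bsub>loc\<^esub> loc_theta R S B"
      using s d by (simp add: T.mult_lfrac mult_lfrac theta TS)
    obtain D a b where "D \<in> T" "a \<in> carrier R" "b \<in> carrier R"
        "A = lfrac R T D (a \<otimes> s)" "B = lfrac R T D (b \<otimes> s)"
      using A B s(1) by (rule T.common_denominator2)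
    then show "loc_theta R S (A \<oplus>\<^bsub>left_localization R T\<^esub> B) = loc_theta R S A \<oplus>\<^bsub>loc\<^esub> loc_theta R S B"
      using s(1) by (simp add: T.add_lfrac add_lfrac theta TS)
  next
    obtain t where t: "t \<in> T" using T.denominators_nonempty by blast
    then show "loc_theta R S \<one>\<^bsub>left_localization R T\<^esub> = \<one>\<^bsub>loc\<^esub>"
      by (simp add: T.one_left_localization one_left_localization[OF TS[OF t]] theta)
  qed
qed

lemma left_denominator_absorbing_subset:
  assumes "T \<subseteq> S" "T \<noteq> {}" and absorb: "\<And>c s. c \<in> T \<Longrightarrow> s \<in> S \<Longrightarrow> c \<otimes> s \<in> T"
  shows "left_denominator R T"
proof -
  obtain c0 where c0: "c0 \<in> T" using assms(2) by blast
  have TS: "t \<in> T \<Longrightarrow> t \<in> S" for t using assms(1) by blast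
  have "mult_closed_nz R T"
    unfolding mult_closed_nz_def using TS absorb zero_not_denominator by auto
  moreover have "left_Ore_cond R T"
    unfolding left_Ore_cond_def
  proof (intro ballI)
    fix r s assume r: "r \<in> carrier R" and s: "s \<in> T"
    obtain s' r' where "s' \<in> S" "r' \<in> carrier R" "s' \<otimes> r = r' \<otimes> s"
      using left_Ore[OF r TS[OF s]] by blast
    moreover from this have "(c0 \<otimes> s') \<otimes> r = (c0 \<otimes> r') \<otimes> s"
      using r s c0 TS by (simp add: m_assoc)
    ultimately show "\<exists>s'\<in>T. \<exists>r'\<in>carrier R. s' \<otimes> r = r' \<otimes> s"
      using absorb[OF c0] c0 TS by (metis m_closed denominator_closed)
  qed
  moreover have "left_denom_cond R T"
    unfolding left_denom_cond_def
  proof (intro ballI impI)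
    fix r s assume r: "r \<in> carrier R" and s: "s \<in> T" and "r \<otimes> s = \<zero>"
    then obtain t where "t \<in> S" "t \<otimes> r = \<zero>" using left_denominator_cond TS by blast
    moreover from this have "(c0 \<otimes> t) \<otimes> r = \<zero>" using r c0 TS by (simp add: m_assoc)
    ultimately show "\<exists>t\<in>T. t \<otimes> r = \<zero>" using absorb[OF c0] by blast
  qed
  ultimately show ?thesis
    unfolding left_denominator_def left_denominator_axioms_def left_denominator_set_no1_def
    using ring_axioms assms(2) by blast
qed

lemma loc_theta_ring_iso:
  assumes "T \<subseteq> S" "T \<noteq> {}" and absorb: "\<And>c s. c \<in> T \<Longrightarrow> s \<in> S \<Longrightarrow> c \<otimes> s \<in> T"
  shows "loc_theta R S \<in> ring_iso (left_localization R T) loc"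
proof -
  interpret T: left_denominator R T
    using left_denominator_absorbing_subset[OF assms] .
  obtain c0 where c0: "c0 \<in> T" using assms(2) by blast
  have TS: "t \<in> T \<Longrightarrow> t \<in> S" for t using assms(1) by blast
  have theta: "loc_theta R S (lfrac R T s r) = lfrac R S s r" if "s \<in> T" "r \<in> carrier R" for s r
    using loc_theta_lfrac[OF assms(1) that] .
  have "inj_on (loc_theta R S) (carrier (left_localization R T))"
  proof (rule inj_onI)
    fix A B assume "A \<in> carrier (left_localization R T)" "B \<in> carrier (left_localization R T)"
      and eq: "loc_theta R S A = loc_theta R S B"
    obtain s r s' r' where A: "s \<in> T" "r \<in> carrier R" "A = lfrac R T s r"
      and B: "s' \<in> T" "r' \<in> carrier R" "B = lfrac R T s' r'"
      by (metis T.left_localization_elem_cases \<open>A \<in> _\<close> \<open>B \<in> _\<close>)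
    have "lfrac R S s r = lfrac R S s' r'" using eq A B by (simp add: theta)
    then obtain x y where xy: "x \<in> carrier R" "y \<in> carrier R" "x \<otimes> s = y \<otimes> s'" "x \<otimes> s \<in> S"
        "x \<otimes> r = y \<otimes> r'"
      using A B TS by (elim lfrac_eqE) auto
    \<comment> \<open>multiplying by an element of \<open>T\<close> moves the common denominator into \<open>T\<close>\<close>
    have "c0 \<otimes> x \<otimes> s \<in> T" using absorb[OF c0 xy(4)] xy c0 A TS by (simp add: m_assoc)
    then show "A = B" unfolding A(3) B(3)
      using xy c0 A B TS by (intro T.lfrac_eqI[where x="c0 \<otimes> x" and y="c0 \<otimes> y"]) (simp_all add: m_assoc)
  qed
  moreover have "loc_theta R S ` carrier (left_localization R T) = carrier loc"
  proof
    show "loc_theta R S ` carrier (left_localization R T) \<subseteq> carrier loc"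
      using loc_theta_ring_hom[OF T.left_denominator_axioms assms(1)] by (auto simp: ring_hom_def)
    show "carrier loc \<subseteq> loc_theta R S ` carrier (left_localization R T)"
    proof
      fix A assume "A \<in> carrier loc"
      then obtain s r where A: "s \<in> S" "r \<in> carrier R" "A = lfrac R S s r"
        by (rule left_localization_elem_cases)
      have c0s: "c0 \<otimes> s \<in> T" using absorb[OF c0 A(1)] .
      then have "A = loc_theta R S (lfrac R T (c0 \<otimes> s) (c0 \<otimes> r))"
        using A c0 TS lfrac_expand[of c0 s r] by (simp add: theta)
      then show "A \<in> loc_theta R S ` carrier (left_localization R T)"
        using c0s A c0 TS by (simp add: T.lfrac_closed)
    qed
  qed
  ultimately show ?thesis
    using loc_theta_ring_hom[OF T.left_denominator_axioms assms(1)]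
    unfolding ring_iso_def bij_betw_def by blast
qed

subsection \<open>The core\<close>

lemma core_subset: "core R S \<subseteq> S"
  unfolding core_def by blast

lemma core_mult_right:
  assumes "c \<in> core R S" "s \<in> S"
  shows "c \<otimes> s \<in> core R S"
proof -
  have c: "c \<in> S" "left_ker R c = ass R S" using assms(1) unfolding core_def by auto
  have cs: "c \<otimes> s \<in> S" using c(1) assms(2) by (rule denominator_mult_closed)
  have "left_ker R (c \<otimes> s) = ass R S"
  proof (intro equalityI subsetI)
    fix a assume "a \<in> left_ker R (c \<otimes> s)"
    then show "a \<in> ass R S" using cs unfolding left_ker_def ass_def by blast
  next
    fix a assume a: "a \<in> ass R S"
    then have aR: "a \<in> carrier R" unfolding ass_def by blast
    have "s \<otimes> a \<in> ass R S" using ass_mult_left[OF a] assms(2) by simp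
    then have "c \<otimes> (s \<otimes> a) = \<zero>" using c(2) unfolding left_ker_def by blast
    then show "a \<in> left_ker R (c \<otimes> s)"
      using aR c(1) assms(2) unfolding left_ker_def by (simp add: m_assoc)
  qed
  then show ?thesis using cs unfolding core_def by blast
qed

lemma ass_core:
  assumes "core R S \<noteq> {}"
  shows "ass R (core R S) = ass R S"
proof
  show "ass R (core R S) \<subseteq> ass R S" using core_subset unfolding ass_def by blast
  obtain c where "c \<in> core R S" using assms by blast
  then have "left_ker R c = ass R S" unfolding core_def by blast
  then show "ass R S \<subseteq> ass R (core R S)"
    using \<open>c \<in> core R S\<close> unfolding left_ker_def ass_def by blast
qed

end

theorem theorem4p2:
  fixes R :: "('a, 'b) ring_scheme" and \<aa> S :: "'a set"
  assumes "ring R"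
    and "ideal \<aa> R"
    and "left_denominator_set R S"
    and "ass R S = \<aa>"
    and "core R S \<noteq> {}"
  shows "left_denominator_set_no1 R (core R S) \<and> ass R (core R S) = \<aa>
    \<and> ring (left_localization R (core R S)) \<and> ring (left_localization R S)
    \<and> loc_theta R S \<in> ring_iso (left_localization R (core R S)) (left_localization R S)
    \<and> (\<forall>s\<in>core R S. \<forall>r\<in>carrier R.
          loc_theta R S (lfrac R (core R S) s r) = lfrac R S s r)
    \<and> (\<forall>s\<in>core R S. \<forall>r\<in>carrier R.
          loc_theta R S (lfrac R (core R S) s (s \<otimes>\<^bsub>R\<^esub> r)) = lfrac R S \<one>\<^bsub>R\<^esub> r)
    \<and> left_localization R (core R S) \<simeq> left_localization R S"
proof -
  have one: "\<one>\<^bsub>R\<^esub> \<in> S" and no1: "left_denominator_set_no1 R S"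
    using assms(3) unfolding left_denominator_set_def left_Ore_set_def multiplicative_set_def
      left_denominator_set_no1_def by blast+
  interpret left_denominator R S
    using assms(1) no1 by (rule left_denominator.intro[OF _ left_denominator_axioms.intro])
  interpret C: left_denominator R "core R S"
    by (rule left_denominator_absorbing_subset[OF core_subset assms(5) core_mult_right])
  have theta: "loc_theta R S (lfrac R (core R S) s r) = lfrac R S s r"
    if "s \<in> core R S" "r \<in> carrier R" for s r
    using loc_theta_lfrac[OF core_subset that] .
  have "lfrac R S s (s \<otimes>\<^bsub>R\<^esub> r) = lfrac R S \<one>\<^bsub>R\<^esub> r" if "s \<in> core R S" "r \<in> carrier R" for s r
    using lfrac_expand[of s "\<one>\<^bsub>R\<^esub>" r] that one core_subset by auto
  moreover have "loc_theta R S \<in> ring_iso (left_localization R (core R S)) (left_localization R S)"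
    by (rule loc_theta_ring_iso[OF core_subset assms(5) core_mult_right])
  ultimately show ?thesis
    using C.left_denominator_set_no1 ass_core[OF assms(5)] assms(4) C.ring_left_localization
      ring_left_localization theta
    unfolding is_ring_iso_def by auto
qed

end
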